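(* Let $Q$ be a quantity space over a field $K$. Then $Q/{\sim}$, with multiplication $[x][y]=[xy]$ and identity $[1_Q]$, is an abelian group.
   Context: A scalable monoid over a (unital, associative) ring $R$ is a monoid $X$ (identity $1_X$, product written $xy$) together with a map $R\times X\to X$, $(\alpha,x)\mapsto\alpha\cdot x$, such that $1\cdot x=x$, $\alpha\cdot(\beta\cdot x)=\alpha\beta\cdot x$ and $\alpha\cdot(xy)=(\alpha\cdot x)y=x(\alpha\cdot y)$ for all $\alpha,\beta\in R$, $x,y\in X$. A quantity space over a field $K$ is a commutative scalable monoid $Q$ over $K$ for which there exists a finite set $\{e_1,\ldots,e_n\}$ of invertible elements of $Q$ (a basis) such that every $x\in Q$ has a unique expansion $x=\mu\cdot\prod_{i=1}^n e_i^{k_i}$ with $\mu\in K$ and $k_1,\ldots,k_n\in\mathbb{Z}$. On $Q$, $x\sim y$ means $\alpha\cdot x=\beta\cdot y$ for some $\alpha,\beta\in K$; this is an equivalence relation compatible with multiplication, $[x]$ denotes the class of $x$, and $Q/{\sim}$ is the set of classes. *)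

theory Defs
  imports "HOL-Algebra.Group"
begin

definition scalable_monoid ::
  "('q \<Rightarrow> 'q \<Rightarrow> 'q) \<Rightarrow> 'q \<Rightarrow> ('k::ring_1 \<Rightarrow> 'q \<Rightarrow> 'q) \<Rightarrow> bool" where
  "scalable_monoid mul e sc \<longleftrightarrow>
     (\<forall>x y z. mul (mul x y) z = mul x (mul y z)) \<and>
     (\<forall>x. mul e x = x \<and> mul x e = x) \<and>
     (\<forall>x. sc 1 x = x) \<and>
     (\<forall>a b x. sc a (sc b x) = sc (a * b) x) \<and>
     (\<forall>a x y. sc a (mul x y) = mul (sc a x) y \<and> sc a (mul x y) = mul x (sc a y))"

definition m_invertible :: "('q \<Rightarrow> 'q \<Rightarrow> 'q) \<Rightarrow> 'q \<Rightarrow> 'q \<Rightarrow> bool" where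
  "m_invertible mul e x \<longleftrightarrow> (\<exists>y. mul x y = e \<and> mul y x = e)"

definition m_inv :: "('q \<Rightarrow> 'q \<Rightarrow> 'q) \<Rightarrow> 'q \<Rightarrow> 'q \<Rightarrow> 'q" where
  "m_inv mul e x = (THE y. mul x y = e \<and> mul y x = e)"

definition m_zpow :: "('q \<Rightarrow> 'q \<Rightarrow> 'q) \<Rightarrow> 'q \<Rightarrow> 'q \<Rightarrow> int \<Rightarrow> 'q" where
  "m_zpow mul e x k =
     (if 0 \<le> k then (mul x ^^ nat k) e else (mul (m_inv mul e x) ^^ nat (- k)) e)"

definition basis_prod :: "('q \<Rightarrow> 'q \<Rightarrow> 'q) \<Rightarrow> 'q \<Rightarrow> 'q list \<Rightarrow> int list \<Rightarrow> 'q" where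
  "basis_prod mul e es ks = foldr (\<lambda>(b, k) acc. mul (m_zpow mul e b k) acc) (zip es ks) e"

text \<open>A quantity space over a field: commutative scalable monoid with a finite
basis {e_1,...,e_n} (given as a distinct list) of invertible elements such that every
element has a unique expansion \<mu> \<cdot> \<Prod> e_i^(k_i).\<close>
definition quantity_space ::
  "('q \<Rightarrow> 'q \<Rightarrow> 'q) \<Rightarrow> 'q \<Rightarrow> ('k::field \<Rightarrow> 'q \<Rightarrow> 'q) \<Rightarrow> bool" where
  "quantity_space mul e sc \<longleftrightarrow>
     scalable_monoid mul e sc \<and>
     (\<forall>x y. mul x y = mul y x) \<and>
     (\<exists>es. distinct es \<and> (\<forall>b\<in>set es. m_invertible mul e b) \<and>
        (\<forall>x. \<exists>!p. length (snd p) = length es \<and>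
                   x = sc (fst p) (basis_prod mul e es (snd p))))"

definition sim_rel :: "('k \<Rightarrow> 'q \<Rightarrow> 'q) \<Rightarrow> ('q \<times> 'q) set" where
  "sim_rel sc = {(x, y). \<exists>a b. sc a x = sc b y}"

definition quot_group ::
  "('q \<Rightarrow> 'q \<Rightarrow> 'q) \<Rightarrow> 'q \<Rightarrow> ('k \<Rightarrow> 'q \<Rightarrow> 'q) \<Rightarrow> 'q set monoid" where
  "quot_group mul e sc =
     \<lparr> carrier = UNIV // sim_rel sc,
       mult = (\<lambda>A B. \<Union>x\<in>A. \<Union>y\<in>B. sim_rel sc `` {mul x y}),
       one = sim_rel sc `` {e} \<rparr>"

end

theory Submission
  imports Defs
begin

text \<open>Scaling by 0 is an idempotent monoid endomorphism of a scalable monoid, and \<open>x \<sim> y\<close>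
holds exactly when \<open>0 \<cdot> x = 0 \<cdot> y\<close>; so \<open>\<sim>\<close> is a congruence and \<open>Q/\<sim>\<close> is a monoid.
In a quantity space every \<open>x = \<mu> \<cdot> \<Prod>i e\<^sub>i\<^bsup>k\<^sub>i\<^esup>\<close> is similar to a product of invertible
basis powers, hence to an invertible element, so every class has an inverse; commutativity
passes to the quotient.\<close>

definition mul_monoid :: "('q \<Rightarrow> 'q \<Rightarrow> 'q) \<Rightarrow> 'q \<Rightarrow> 'q monoid" where
  "mul_monoid mul e = \<lparr>carrier = UNIV, mult = mul, one = e\<rparr>"

lemma monoid_mul_monoid:
  assumes "\<And>x y z. mul (mul x y) z = mul x (mul y z)"
    and "\<And>x. mul e x = x" and "\<And>x. mul x e = x"
  shows "monoid (mul_monoid mul e)"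
  by (rule monoidI) (simp_all add: mul_monoid_def assms)

lemma m_invertible_iff_Units: "m_invertible mul e x \<longleftrightarrow> x \<in> Units (mul_monoid mul e)"
  by (auto simp: m_invertible_def Units_def mul_monoid_def)

lemma m_inv_eq_inv: "m_inv mul e x = inv\<^bsub>mul_monoid mul e\<^esub> x"
  by (simp add: m_inv_def Group.m_inv_def mul_monoid_def)

context
  fixes mul :: "'q \<Rightarrow> 'q \<Rightarrow> 'q" and e :: 'q
  assumes monoid: "monoid (mul_monoid mul e)"
begin

lemma funpow_mul_Units:
  assumes "b \<in> Units (mul_monoid mul e)"
  shows "(mul b ^^ n) e \<in> Units (mul_monoid mul e)"
proof (induction n)
  case 0
  show ?case using monoid.Units_one_closed[OF monoid] by (simp add: mul_monoid_def)
next
  case (Suc n)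
  then show ?case
    using monoid.Units_m_closed[OF monoid assms Suc] by (simp add: mul_monoid_def)
qed

lemma m_zpow_Units:
  assumes "b \<in> Units (mul_monoid mul e)"
  shows "m_zpow mul e b k \<in> Units (mul_monoid mul e)"
  using funpow_mul_Units[OF assms] funpow_mul_Units[OF monoid.Units_inv_Units[OF monoid assms]]
  by (simp add: m_zpow_def m_inv_eq_inv)

lemma basis_prod_Units:
  assumes "set es \<subseteq> Units (mul_monoid mul e)"
  shows "basis_prod mul e es ks \<in> Units (mul_monoid mul e)"
  using assms
proof (induction es arbitrary: ks)
  case Nil
  show ?case using monoid.Units_one_closed[OF monoid] by (simp add: basis_prod_def mul_monoid_def)
next
  case (Cons b es)
  show ?case
  proof (cases ks)
    case Nil
    then show ?thesis
      using monoid.Units_one_closed[OF monoid] by (simp add: basis_prod_def mul_monoid_def)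
  next
    case (Cons k ks')
    have "basis_prod mul e (b # es) ks = mul (m_zpow mul e b k) (basis_prod mul e es ks')"
      by (simp add: basis_prod_def Cons)
    moreover have "m_zpow mul e b k \<in> Units (mul_monoid mul e)"
      using Cons.prems m_zpow_Units by simp
    moreover have "basis_prod mul e es ks' \<in> Units (mul_monoid mul e)"
      using Cons.IH Cons.prems by simp
    ultimately show ?thesis
      using monoid.Units_m_closed[OF monoid] by (simp add: mul_monoid_def)
  qed
qed

end

context
  fixes mul :: "'q \<Rightarrow> 'q \<Rightarrow> 'q" and e :: 'q and sc :: "'k::ring_1 \<Rightarrow> 'q \<Rightarrow> 'q"
  assumes scalable: "scalable_monoid mul e sc"
begin

lemma sim_rel_iff_zero_scale: "(x, y) \<in> sim_rel sc \<longleftrightarrow> sc 0 x = sc 0 y"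
proof
  assume "(x, y) \<in> sim_rel sc"
  then obtain a b where "sc a x = sc b y" by (auto simp: sim_rel_def)
  then have "sc 0 (sc a x) = sc 0 (sc b y)" by simp
  then show "sc 0 x = sc 0 y" using scalable by (simp add: scalable_monoid_def)
next
  assume "sc 0 x = sc 0 y"
  then show "(x, y) \<in> sim_rel sc" by (auto simp: sim_rel_def)
qed

lemma zero_scale_mul: "sc 0 (mul x y) = mul (sc 0 x) (sc 0 y)"
proof -
  have "sc 0 (mul x y) = sc 0 (sc 0 (mul x y))"
    using scalable by (simp add: scalable_monoid_def)
  also have "\<dots> = sc 0 (mul (sc 0 x) y)"
    using scalable unfolding scalable_monoid_def by metis
  also have "\<dots> = mul (sc 0 x) (sc 0 y)"
    using scalable unfolding scalable_monoid_def by metis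
  finally show ?thesis .
qed

lemma equiv_sim_rel: "equiv UNIV (sim_rel sc)"
  by (rule equivI) (auto simp: refl_on_def sym_def trans_def sim_rel_iff_zero_scale)

lemma sim_rel_mul:
  assumes "(x, x') \<in> sim_rel sc" and "(y, y') \<in> sim_rel sc"
  shows "(mul x y, mul x' y') \<in> sim_rel sc"
  using assms by (simp add: sim_rel_iff_zero_scale zero_scale_mul)

lemma quot_group_mult_class:
  "sim_rel sc `` {x} \<otimes>\<^bsub>quot_group mul e sc\<^esub> sim_rel sc `` {y} = sim_rel sc `` {mul x y}"
proof -
  have "congruent2 (sim_rel sc) (sim_rel sc) (\<lambda>x y. sim_rel sc `` {mul x y})"
    unfolding congruent2_def
    by (clarify, rule equiv_class_eq[OF equiv_sim_rel], rule sim_rel_mul)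
  then show ?thesis
    by (simp add: quot_group_def UN_equiv_class2[OF equiv_sim_rel equiv_sim_rel])
qed

lemma quot_group_one: "\<one>\<^bsub>quot_group mul e sc\<^esub> = sim_rel sc `` {e}"
  by (simp add: quot_group_def)

lemma quot_group_carrierE:
  assumes "A \<in> carrier (quot_group mul e sc)"
  obtains x where "A = sim_rel sc `` {x}"
  using assms by (auto simp: quot_group_def elim: quotientE)

lemma class_in_quot_group_carrier: "sim_rel sc `` {x} \<in> carrier (quot_group mul e sc)"
  by (simp add: quot_group_def quotientI)

lemma monoid_quot_group: "monoid (quot_group mul e sc)"
proof -
  have assoc: "\<And>x y z. mul (mul x y) z = mul x (mul y z)"
    and unit: "\<And>x. mul e x = x" "\<And>x. mul x e = x"
    using scalable by (simp_all add: scalable_monoid_def)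
  show ?thesis
    by (rule monoidI)
      (auto elim!: quot_group_carrierE
        simp: quot_group_mult_class quot_group_one class_in_quot_group_carrier assoc unit)
qed

lemma comm_group_quot_groupI:
  assumes similar_unit: "\<And>x. \<exists>u. m_invertible mul e u \<and> (x, u) \<in> sim_rel sc"
    and comm: "\<And>x y. mul x y = mul y x"
  shows "comm_group (quot_group mul e sc)"
proof -
  let ?Q = "quot_group mul e sc"
  have l_inv_ex: "\<exists>B \<in> carrier ?Q. B \<otimes>\<^bsub>?Q\<^esub> sim_rel sc `` {x} = \<one>\<^bsub>?Q\<^esub>" for x
  proof -
    obtain u u' where "(x, u) \<in> sim_rel sc" and "mul u' u = e"
      using similar_unit[of x] by (auto simp: m_invertible_def)
    moreover have "(u', u') \<in> sim_rel sc"
      by (simp add: sim_rel_iff_zero_scale)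
    ultimately have "(mul u' x, e) \<in> sim_rel sc"
      using sim_rel_mul by metis
    then have "sim_rel sc `` {u'} \<otimes>\<^bsub>?Q\<^esub> sim_rel sc `` {x} = \<one>\<^bsub>?Q\<^esub>"
      by (simp add: quot_group_mult_class quot_group_one equiv_class_eq[OF equiv_sim_rel])
    then show ?thesis using class_in_quot_group_carrier by blast
  qed
  have "group ?Q"
    by (rule monoid.group_l_invI[OF monoid_quot_group])
      (auto elim!: quot_group_carrierE intro: l_inv_ex)
  then show ?thesis
    by (rule group.group_comm_groupI)
      (auto elim!: quot_group_carrierE simp: quot_group_mult_class comm)
qed

end

lemma quantity_space_similar_unit:
  assumes "quantity_space mul e sc"
  shows "\<exists>u. m_invertible mul e u \<and> (x, u) \<in> sim_rel sc"
proof -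
  obtain es where basis_units: "\<forall>b\<in>set es. m_invertible mul e b"
    and expansion: "\<forall>x. \<exists>p. x = sc (fst p) (basis_prod mul e es (snd p))"
    using assms unfolding quantity_space_def by metis
  obtain \<mu> ks where x: "x = sc \<mu> (basis_prod mul e es ks)"
    using expansion by fastforce
  have "monoid (mul_monoid mul e)"
    using assms unfolding quantity_space_def scalable_monoid_def
    by (intro monoid_mul_monoid) blast+
  then have "m_invertible mul e (basis_prod mul e es ks)"
    using basis_units by (simp add: basis_prod_Units subset_iff m_invertible_iff_Units)
  moreover have "(x, basis_prod mul e es ks) \<in> sim_rel sc"
    using assms x by (auto simp: sim_rel_def quantity_space_def scalable_monoid_def)
  ultimately show ?thesis by blast
qed

theorem proposition3p18:
  fixes mul :: "'q \<Rightarrow> 'q \<Rightarrow> 'q" and e :: 'q and sc :: "'k::field \<Rightarrow> 'q \<Rightarrow> 'q"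
  assumes "quantity_space mul e sc"
  shows "comm_group (quot_group mul e sc)"
proof (rule comm_group_quot_groupI)
  show "scalable_monoid mul e sc" and "\<And>x y. mul x y = mul y x"
    using assms by (simp_all add: quantity_space_def)
  show "\<And>x. \<exists>u. m_invertible mul e u \<and> (x, u) \<in> sim_rel sc"
    using assms by (rule quantity_space_similar_unit)
qed

end
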